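(* Let $m>0$, $\gamma\in\mathbb{R}$, $f$ a real function, and consider the system $$i\partial_t\psi_1=\partial_x\psi_2-f(|\psi_1|^2-|\psi_2|^2)\psi_1+m\psi_1+i\gamma\psi_2,\qquad i\partial_t\psi_2=-\partial_x\psi_1+f(|\psi_1|^2-|\psi_2|^2)\psi_2-m\psi_2+i\gamma\psi_1.$$ Suppose $(\tilde v(x),\tilde u(x))$ (complex-valued) is such that $(\tilde v,\tilde u)^Te^{-i\tilde\omega t}$ is a solution. Then for all $\alpha_\pm\in\mathbb{C}$ with $|\alpha_-|^2-|\alpha_+|^2=1$, $$\psi_1(t,x)=\alpha_-\tilde v(x)e^{-i\tilde\omega t}-i\alpha_+\overline{\tilde u(x)}e^{i\tilde\omega t},\qquad \psi_2(t,x)=\alpha_-\tilde u(x)e^{-i\tilde\omega t}-i\alpha_+\overline{\tilde v(x)}e^{i\tilde\omega t}$$ is also a solution, and $|\psi_1|^2-|\psi_2|^2=|\tilde v|^2-|\tilde u|^2$ for all $t$.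
   Context: This is the one-dimensional Soler model with a $\mathcal{P}\mathcal{T}$-symmetric gain–loss term $i\gamma\sigma_1\psi$ (the case $\gamma=0$ is the ordinary 1D Soler model). Overline denotes complex conjugation. *)

theory Defs
  imports Complex_Main
begin

definition soler_solution ::
  "real \<Rightarrow> real \<Rightarrow> (real \<Rightarrow> real) \<Rightarrow> (real \<Rightarrow> real \<Rightarrow> complex) \<Rightarrow> (real \<Rightarrow> real \<Rightarrow> complex) \<Rightarrow> bool"
where
  "soler_solution m \<gamma> f \<psi>1 \<psi>2 \<longleftrightarrow>
     (\<forall>t x. \<exists>d1t d1x d2t d2x.
        ((\<lambda>s. \<psi>1 s x) has_vector_derivative d1t) (at t) \<and>
        ((\<lambda>y. \<psi>1 t y) has_vector_derivative d1x) (at x) \<and>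
        ((\<lambda>s. \<psi>2 s x) has_vector_derivative d2t) (at t) \<and>
        ((\<lambda>y. \<psi>2 t y) has_vector_derivative d2x) (at x) \<and>
        \<i> * d1t = d2x - complex_of_real (f ((cmod (\<psi>1 t x))\<^sup>2 - (cmod (\<psi>2 t x))\<^sup>2)) * \<psi>1 t x
                    + complex_of_real m * \<psi>1 t x + \<i> * complex_of_real \<gamma> * \<psi>2 t x \<and>
        \<i> * d2t = - d1x + complex_of_real (f ((cmod (\<psi>1 t x))\<^sup>2 - (cmod (\<psi>2 t x))\<^sup>2)) * \<psi>2 t x
                    - complex_of_real m * \<psi>2 t x + \<i> * complex_of_real \<gamma> * \<psi>1 t x)"

end

theory Submission
  imports Defs
begin

text \<open>Freezing the nonlinearity turns the Soler system into a linear Dirac system with the real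
  scalar potential W = f(|psi1|^2 - |psi2|^2). That linear system is invariant under linear
  combinations and under the charge conjugation C(psi1, psi2) = (-i conj psi2, -i conj psi1).
  For phi = a psi + b C psi the cross terms cancel in the charge, so that
  |phi1|^2 - |phi2|^2 = (|a|^2 - |b|^2) (|psi1|^2 - |psi2|^2). When |a|^2 - |b|^2 = 1 the frozen
  potential of phi is that of psi, hence phi solves the nonlinear system too. This works for every
  solution psi, not only for standing waves.\<close>

definition linear_soler_solution ::
  "real \<Rightarrow> real \<Rightarrow> (real \<Rightarrow> real \<Rightarrow> real) \<Rightarrow> (real \<Rightarrow> real \<Rightarrow> complex) \<Rightarrow> (real \<Rightarrow> real \<Rightarrow> complex) \<Rightarrow> bool"
where
  "linear_soler_solution m \<gamma> W \<psi>1 \<psi>2 \<longleftrightarrow>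
     (\<forall>t x. \<exists>d1t d1x d2t d2x.
        ((\<lambda>s. \<psi>1 s x) has_vector_derivative d1t) (at t) \<and>
        ((\<lambda>y. \<psi>1 t y) has_vector_derivative d1x) (at x) \<and>
        ((\<lambda>s. \<psi>2 s x) has_vector_derivative d2t) (at t) \<and>
        ((\<lambda>y. \<psi>2 t y) has_vector_derivative d2x) (at x) \<and>
        \<i> * d1t = d2x - complex_of_real (W t x) * \<psi>1 t x
                    + complex_of_real m * \<psi>1 t x + \<i> * complex_of_real \<gamma> * \<psi>2 t x \<and>
        \<i> * d2t = - d1x + complex_of_real (W t x) * \<psi>2 t x
                    - complex_of_real m * \<psi>2 t x + \<i> * complex_of_real \<gamma> * \<psi>1 t x)"

lemma soler_solution_iff_linear:
  "soler_solution m \<gamma> f \<psi>1 \<psi>2 \<longleftrightarrow>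
     linear_soler_solution m \<gamma> (\<lambda>t x. f ((cmod (\<psi>1 t x))\<^sup>2 - (cmod (\<psi>2 t x))\<^sup>2)) \<psi>1 \<psi>2"
  unfolding soler_solution_def linear_soler_solution_def ..

lemma linear_soler_solution_lincomb:
  assumes "linear_soler_solution m \<gamma> W \<psi>1 \<psi>2" and "linear_soler_solution m \<gamma> W \<phi>1 \<phi>2"
  shows "linear_soler_solution m \<gamma> W (\<lambda>t x. a * \<psi>1 t x + b * \<phi>1 t x) (\<lambda>t x. a * \<psi>2 t x + b * \<phi>2 t x)"
  unfolding linear_soler_solution_def
proof (intro allI)
  fix t x
  obtain d1t d1x d2t d2x where \<psi>:
      "((\<lambda>s. \<psi>1 s x) has_vector_derivative d1t) (at t)" "((\<lambda>y. \<psi>1 t y) has_vector_derivative d1x) (at x)"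
      "((\<lambda>s. \<psi>2 s x) has_vector_derivative d2t) (at t)" "((\<lambda>y. \<psi>2 t y) has_vector_derivative d2x) (at x)"
    and \<psi>_eqs:
      "\<i> * d1t = d2x - of_real (W t x) * \<psi>1 t x + of_real m * \<psi>1 t x + \<i> * of_real \<gamma> * \<psi>2 t x"
      "\<i> * d2t = - d1x + of_real (W t x) * \<psi>2 t x - of_real m * \<psi>2 t x + \<i> * of_real \<gamma> * \<psi>1 t x"
    using assms(1) unfolding linear_soler_solution_def by blast
  obtain e1t e1x e2t e2x where \<phi>:
      "((\<lambda>s. \<phi>1 s x) has_vector_derivative e1t) (at t)" "((\<lambda>y. \<phi>1 t y) has_vector_derivative e1x) (at x)"
      "((\<lambda>s. \<phi>2 s x) has_vector_derivative e2t) (at t)" "((\<lambda>y. \<phi>2 t y) has_vector_derivative e2x) (at x)"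
    and \<phi>_eqs:
      "\<i> * e1t = e2x - of_real (W t x) * \<phi>1 t x + of_real m * \<phi>1 t x + \<i> * of_real \<gamma> * \<phi>2 t x"
      "\<i> * e2t = - e1x + of_real (W t x) * \<phi>2 t x - of_real m * \<phi>2 t x + \<i> * of_real \<gamma> * \<phi>1 t x"
    using assms(2) unfolding linear_soler_solution_def by blast
  have eq1: "\<i> * (a * d1t + b * e1t) = (a * d2x + b * e2x) - of_real (W t x) * (a * \<psi>1 t x + b * \<phi>1 t x)
      + of_real m * (a * \<psi>1 t x + b * \<phi>1 t x) + \<i> * of_real \<gamma> * (a * \<psi>2 t x + b * \<phi>2 t x)"
  proof -
    have "\<i> * (a * d1t + b * e1t) = a * (\<i> * d1t) + b * (\<i> * e1t)"
      by (simp add: algebra_simps)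
    then show ?thesis
      unfolding \<psi>_eqs \<phi>_eqs by (simp add: algebra_simps)
  qed
  have eq2: "\<i> * (a * d2t + b * e2t) = - (a * d1x + b * e1x) + of_real (W t x) * (a * \<psi>2 t x + b * \<phi>2 t x)
      - of_real m * (a * \<psi>2 t x + b * \<phi>2 t x) + \<i> * of_real \<gamma> * (a * \<psi>1 t x + b * \<phi>1 t x)"
  proof -
    have "\<i> * (a * d2t + b * e2t) = a * (\<i> * d2t) + b * (\<i> * e2t)"
      by (simp add: algebra_simps)
    then show ?thesis
      unfolding \<psi>_eqs \<phi>_eqs by (simp add: algebra_simps)
  qed
  show "\<exists>d1t d1x d2t d2x.
      ((\<lambda>s. a * \<psi>1 s x + b * \<phi>1 s x) has_vector_derivative d1t) (at t) \<and>
      ((\<lambda>y. a * \<psi>1 t y + b * \<phi>1 t y) has_vector_derivative d1x) (at x) \<and>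
      ((\<lambda>s. a * \<psi>2 s x + b * \<phi>2 s x) has_vector_derivative d2t) (at t) \<and>
      ((\<lambda>y. a * \<psi>2 t y + b * \<phi>2 t y) has_vector_derivative d2x) (at x) \<and>
      \<i> * d1t = d2x - of_real (W t x) * (a * \<psi>1 t x + b * \<phi>1 t x)
                  + of_real m * (a * \<psi>1 t x + b * \<phi>1 t x) + \<i> * of_real \<gamma> * (a * \<psi>2 t x + b * \<phi>2 t x) \<and>
      \<i> * d2t = - d1x + of_real (W t x) * (a * \<psi>2 t x + b * \<phi>2 t x)
                  - of_real m * (a * \<psi>2 t x + b * \<phi>2 t x) + \<i> * of_real \<gamma> * (a * \<psi>1 t x + b * \<phi>1 t x)"
    by (rule exI[of _ "a * d1t + b * e1t"], rule exI[of _ "a * d1x + b * e1x"],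
        rule exI[of _ "a * d2t + b * e2t"], rule exI[of _ "a * d2x + b * e2x"])
       (intro conjI has_vector_derivative_add has_vector_derivative_mult_right \<psi> \<phi> eq1 eq2)
qed

text \<open>Conjugating the system and using that W is real swaps the roles of the two equations.\<close>

lemma linear_soler_solution_charge_conj:
  assumes "linear_soler_solution m \<gamma> W \<psi>1 \<psi>2"
  shows "linear_soler_solution m \<gamma> W (\<lambda>t x. - \<i> * cnj (\<psi>2 t x)) (\<lambda>t x. - \<i> * cnj (\<psi>1 t x))"
  unfolding linear_soler_solution_def
proof (intro allI)
  fix t x
  obtain d1t d1x d2t d2x where \<psi>:
      "((\<lambda>s. \<psi>1 s x) has_vector_derivative d1t) (at t)" "((\<lambda>y. \<psi>1 t y) has_vector_derivative d1x) (at x)"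
      "((\<lambda>s. \<psi>2 s x) has_vector_derivative d2t) (at t)" "((\<lambda>y. \<psi>2 t y) has_vector_derivative d2x) (at x)"
    and \<psi>_eqs:
      "\<i> * d1t = d2x - of_real (W t x) * \<psi>1 t x + of_real m * \<psi>1 t x + \<i> * of_real \<gamma> * \<psi>2 t x"
      "\<i> * d2t = - d1x + of_real (W t x) * \<psi>2 t x - of_real m * \<psi>2 t x + \<i> * of_real \<gamma> * \<psi>1 t x"
    using assms unfolding linear_soler_solution_def by blast
  have conj_eqs:
      "- \<i> * cnj d1t = cnj d2x - of_real (W t x) * cnj (\<psi>1 t x) + of_real m * cnj (\<psi>1 t x)
                        - \<i> * of_real \<gamma> * cnj (\<psi>2 t x)"
      "- \<i> * cnj d2t = - cnj d1x + of_real (W t x) * cnj (\<psi>2 t x) - of_real m * cnj (\<psi>2 t x)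
                        - \<i> * of_real \<gamma> * cnj (\<psi>1 t x)"
    using arg_cong[OF \<psi>_eqs(1), of cnj] arg_cong[OF \<psi>_eqs(2), of cnj] by simp_all
  have eq1: "\<i> * (- \<i> * cnj d2t) = - \<i> * cnj d1x - of_real (W t x) * (- \<i> * cnj (\<psi>2 t x))
      + of_real m * (- \<i> * cnj (\<psi>2 t x)) + \<i> * of_real \<gamma> * (- \<i> * cnj (\<psi>1 t x))"
    unfolding conj_eqs(2) by (simp add: algebra_simps)
  have eq2: "\<i> * (- \<i> * cnj d1t) = - (- \<i> * cnj d2x) + of_real (W t x) * (- \<i> * cnj (\<psi>1 t x))
      - of_real m * (- \<i> * cnj (\<psi>1 t x)) + \<i> * of_real \<gamma> * (- \<i> * cnj (\<psi>2 t x))"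
    unfolding conj_eqs(1) by (simp add: algebra_simps)
  show "\<exists>d1t d1x d2t d2x.
      ((\<lambda>s. - \<i> * cnj (\<psi>2 s x)) has_vector_derivative d1t) (at t) \<and>
      ((\<lambda>y. - \<i> * cnj (\<psi>2 t y)) has_vector_derivative d1x) (at x) \<and>
      ((\<lambda>s. - \<i> * cnj (\<psi>1 s x)) has_vector_derivative d2t) (at t) \<and>
      ((\<lambda>y. - \<i> * cnj (\<psi>1 t y)) has_vector_derivative d2x) (at x) \<and>
      \<i> * d1t = d2x - of_real (W t x) * (- \<i> * cnj (\<psi>2 t x))
                  + of_real m * (- \<i> * cnj (\<psi>2 t x)) + \<i> * of_real \<gamma> * (- \<i> * cnj (\<psi>1 t x)) \<and>
      \<i> * d2t = - d1x + of_real (W t x) * (- \<i> * cnj (\<psi>1 t x))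
                  - of_real m * (- \<i> * cnj (\<psi>1 t x)) + \<i> * of_real \<gamma> * (- \<i> * cnj (\<psi>2 t x))"
    by (rule exI[of _ "- \<i> * cnj d2t"], rule exI[of _ "- \<i> * cnj d2x"],
        rule exI[of _ "- \<i> * cnj d1t"], rule exI[of _ "- \<i> * cnj d1x"])
       (intro conjI has_vector_derivative_mult_right has_vector_derivative_cnj \<psi> eq1 eq2)
qed

lemma charge_lincomb_charge_conj:
  fixes a b p q :: complex
  shows "(cmod (a * p + b * (- \<i> * cnj q)))\<^sup>2 - (cmod (a * q + b * (- \<i> * cnj p)))\<^sup>2
         = ((cmod a)\<^sup>2 - (cmod b)\<^sup>2) * ((cmod p)\<^sup>2 - (cmod q)\<^sup>2)"
proof -
  have "complex_of_real ((cmod (a * p + b * (- \<i> * cnj q)))\<^sup>2 - (cmod (a * q + b * (- \<i> * cnj p)))\<^sup>2)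
      = (a * p + b * (- \<i> * cnj q)) * cnj (a * p + b * (- \<i> * cnj q))
        - (a * q + b * (- \<i> * cnj p)) * cnj (a * q + b * (- \<i> * cnj p))"
    by (simp only: of_real_diff complex_norm_square)
  also have "\<dots> = (a * cnj a - b * cnj b) * (p * cnj p - q * cnj q)"
    by (simp add: algebra_simps)
  also have "\<dots> = complex_of_real (((cmod a)\<^sup>2 - (cmod b)\<^sup>2) * ((cmod p)\<^sup>2 - (cmod q)\<^sup>2))"
    by (simp only: of_real_mult of_real_diff complex_norm_square)
  finally show ?thesis
    using of_real_eq_iff by blast
qed

theorem soler_solution_charge_conj_mix:
  assumes sol: "soler_solution m \<gamma> f \<psi>1 \<psi>2" and norm: "(cmod a)\<^sup>2 - (cmod b)\<^sup>2 = 1"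
  defines "\<phi>1 \<equiv> \<lambda>t x. a * \<psi>1 t x + b * (- \<i> * cnj (\<psi>2 t x))"
    and "\<phi>2 \<equiv> \<lambda>t x. a * \<psi>2 t x + b * (- \<i> * cnj (\<psi>1 t x))"
  shows "soler_solution m \<gamma> f \<phi>1 \<phi>2"
    and "(cmod (\<phi>1 t x))\<^sup>2 - (cmod (\<phi>2 t x))\<^sup>2 = (cmod (\<psi>1 t x))\<^sup>2 - (cmod (\<psi>2 t x))\<^sup>2"
proof -
  show charge: "(cmod (\<phi>1 t x))\<^sup>2 - (cmod (\<phi>2 t x))\<^sup>2 = (cmod (\<psi>1 t x))\<^sup>2 - (cmod (\<psi>2 t x))\<^sup>2" for t x
    unfolding \<phi>1_def \<phi>2_def charge_lincomb_charge_conj norm by simp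
  let ?W = "\<lambda>t x. f ((cmod (\<psi>1 t x))\<^sup>2 - (cmod (\<psi>2 t x))\<^sup>2)"
  have lin: "linear_soler_solution m \<gamma> ?W \<psi>1 \<psi>2"
    using sol by (simp only: soler_solution_iff_linear)
  have "linear_soler_solution m \<gamma> ?W \<phi>1 \<phi>2"
    unfolding \<phi>1_def \<phi>2_def
    using linear_soler_solution_lincomb[OF lin linear_soler_solution_charge_conj[OF lin]] .
  then show "soler_solution m \<gamma> f \<phi>1 \<phi>2"
    by (simp only: soler_solution_iff_linear charge)
qed

lemma cnj_exp_minus_i_real: "cnj (exp (- \<i> * complex_of_real r)) = exp (\<i> * complex_of_real r)"
proof -
  have "cnj (exp (- \<i> * complex_of_real r)) = cnj (cis (- r))"
    by (simp add: cis_conv_exp)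
  also have "\<dots> = cis r"
    by (simp add: cis_cnj)
  finally show ?thesis
    by (simp only: cis_conv_exp)
qed

theorem mainTheorem6:
  fixes m \<gamma> \<omega> :: real and f :: "real \<Rightarrow> real"
    and v u :: "real \<Rightarrow> complex" and \<alpha>p \<alpha>m :: complex
  assumes "m > 0"
    and "soler_solution m \<gamma> f (\<lambda>t x. v x * exp (- \<i> * complex_of_real (\<omega> * t)))
                                 (\<lambda>t x. u x * exp (- \<i> * complex_of_real (\<omega> * t)))"
    and "(cmod \<alpha>m)\<^sup>2 - (cmod \<alpha>p)\<^sup>2 = 1"
  shows "soler_solution m \<gamma> f
           (\<lambda>t x. \<alpha>m * v x * exp (- \<i> * complex_of_real (\<omega> * t))
                  - \<i> * \<alpha>p * cnj (u x) * exp (\<i> * complex_of_real (\<omega> * t)))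
           (\<lambda>t x. \<alpha>m * u x * exp (- \<i> * complex_of_real (\<omega> * t))
                  - \<i> * \<alpha>p * cnj (v x) * exp (\<i> * complex_of_real (\<omega> * t)))
       \<and> (\<forall>t x.
           (cmod (\<alpha>m * v x * exp (- \<i> * complex_of_real (\<omega> * t))
                  - \<i> * \<alpha>p * cnj (u x) * exp (\<i> * complex_of_real (\<omega> * t))))\<^sup>2
         - (cmod (\<alpha>m * u x * exp (- \<i> * complex_of_real (\<omega> * t))
                  - \<i> * \<alpha>p * cnj (v x) * exp (\<i> * complex_of_real (\<omega> * t))))\<^sup>2
         = (cmod (v x))\<^sup>2 - (cmod (u x))\<^sup>2)"
proof -
  let ?E = "\<lambda>t. exp (- \<i> * complex_of_real (\<omega> * t))"
  have conj_phase: "- \<i> * cnj (w * ?E t) = - \<i> * cnj w * exp (\<i> * complex_of_real (\<omega> * t))" for w t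
    by (simp only: complex_cnj_mult cnj_exp_minus_i_real mult.assoc)
  have unit_phase: "cmod (?E t) = 1" for t
    by simp
  note mix = soler_solution_charge_conj_mix[OF assms(2,3), unfolded conj_phase]
  show ?thesis
    using mix by (simp add: algebra_simps norm_mult unit_phase)
qed

end
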